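(* Let $q\in(0,1]$. Then $\omega(R(SU_q(2)))=q^{-2}$.
   Context: $R(SU_q(2))$ is the fusion algebra with irreducible objects $I=\mathbb{Z}_+$, unit $0$, trivial involution, product $m\cdot n=\sum_{k\in\{|m-n|,|m-n|+2,\dots,m+n\}}k$, and dimension $d(n)=[n+1]_q$, where $[x]_q=\frac{q^{-x}-q^x}{q^{-1}-q}$ for $0<q<1$ and $[x]_1=x$. For $A\subseteq I$, $|A|=\sum_{\beta\in A}d(\beta)^2$. A finite generating set is a finite $X\subseteq I$ such that every $\beta\in I$ appears with nonzero coefficient in some product $x_1\cdots x_n$, $x_i\in X$; $\ell_X(0)=0$ and otherwise $\ell_X(\beta)$ is the least such $n\ge1$; $B_X(n)=\{\beta:\ell_X(\beta)\le n\}$. $\omega_X=\lim_{n\to\infty}|B_X(n)|^{1/n}$ (the limit exists) and $\omega(R(SU_q(2)))=\inf_X\omega_X$ over finite generating sets. *)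

theory Defs
  imports "HOL-Analysis.Analysis"
begin

text \<open>The fusion algebra R(SU_q(2)): irreducibles are natural numbers, elements of the
  positive cone are finitely supported functions nat => nat (multiplicities).\<close>

definition fus_coeff :: "nat \<Rightarrow> nat \<Rightarrow> nat \<Rightarrow> nat" where
  "fus_coeff m n k = (if (if m \<le> n then n - m else m - n) \<le> k \<and> k \<le> m + n
                         \<and> even (k + m + n) then 1 else 0)"

definition fus_mult :: "(nat \<Rightarrow> nat) \<Rightarrow> (nat \<Rightarrow> nat) \<Rightarrow> (nat \<Rightarrow> nat)" where
  "fus_mult a b = (\<lambda>k. \<Sum>m\<in>{m. a m \<noteq> 0}. \<Sum>n\<in>{n. b n \<noteq> 0}. a m * b n * fus_coeff m n k)"

definition fus_basis :: "nat \<Rightarrow> (nat \<Rightarrow> nat)" where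
  "fus_basis x = (\<lambda>k. if k = x then 1 else 0)"

definition fus_prod :: "nat list \<Rightarrow> (nat \<Rightarrow> nat)" where
  "fus_prod xs = foldr (\<lambda>x acc. fus_mult (fus_basis x) acc) xs (fus_basis 0)"

definition qnum :: "real \<Rightarrow> real \<Rightarrow> real" where
  "qnum q x = (if q = 1 then x else (q powr (- x) - q powr x) / (q powr (-1) - q))"

definition qdim :: "real \<Rightarrow> nat \<Rightarrow> real" where
  "qdim q n = qnum q (real n + 1)"

definition set_weight :: "real \<Rightarrow> nat set \<Rightarrow> real" where
  "set_weight q A = (\<Sum>\<beta>\<in>A. (qdim q \<beta>)\<^sup>2)"

definition generating_set :: "nat set \<Rightarrow> bool" where
  "generating_set X \<longleftrightarrow> finite X \<and>
     (\<forall>\<beta>. \<exists>xs. xs \<noteq> [] \<and> set xs \<subseteq> X \<and> fus_prod xs \<beta> \<noteq> 0)"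

definition word_length :: "nat set \<Rightarrow> nat \<Rightarrow> nat" where
  "word_length X \<beta> = (if \<beta> = 0 then 0 else
     (LEAST n. n \<ge> 1 \<and> (\<exists>xs. length xs = n \<and> set xs \<subseteq> X \<and> fus_prod xs \<beta> \<noteq> 0)))"

definition ball_X :: "nat set \<Rightarrow> nat \<Rightarrow> nat set" where
  "ball_X X n = {\<beta>. word_length X \<beta> \<le> n}"

definition growth_rate :: "real \<Rightarrow> nat set \<Rightarrow> real" where
  "growth_rate q X = lim (\<lambda>n. set_weight q (ball_X X n) powr (1 / real n))"

definition uniform_growth :: "real \<Rightarrow> real" where
  "uniform_growth q = Inf {growth_rate q X | X. generating_set X}"

end

(* For a generating set X with largest element M, every irreducible occurring in a product of
   n elements of X is at most nM, and the n-th power of M contains nM itself. Hence the ball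
   B_X(n) lies between {nM} and {0..nM}. Since q^(-k) <= d(k) <= (k+1) q^(-k), the weight of the
   ball lies between q^(-2nM) and (nM+1)^3 q^(-2nM), so omega_X = q^(-2M), which is minimal
   for X = {1}. *)

theory Submission
  imports Defs "HOL-Real_Asymp.Real_Asymp"
begin

lemma sum_list_le_length_mult_Max:
  assumes "finite X" "set xs \<subseteq> X"
  shows "sum_list xs \<le> length xs * Max X"
proof -
  have "sum_list (map id xs) \<le> sum_list (map (\<lambda>_. Max X) xs)"
    using assms by (intro sum_list_mono) auto
  then show ?thesis
    by (simp add: map_replicate_const sum_list_replicate)
qed

lemma fus_prod_Nil: "fus_prod [] = fus_basis 0"
  by (simp add: fus_prod_def)

lemma fus_prod_Cons_apply:
  "fus_prod (x # xs) k = (\<Sum>n | fus_prod xs n \<noteq> 0. fus_prod xs n * fus_coeff x n k)"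
proof -
  have "{m. fus_basis x m \<noteq> 0} = {x}"
    by (auto simp: fus_basis_def)
  then show ?thesis
    by (simp add: fus_prod_def fus_mult_def fus_basis_def)
qed

lemma fus_coeff_nonzero_le: "fus_coeff m n k \<noteq> 0 \<Longrightarrow> k \<le> m + n"
  by (simp add: fus_coeff_def split: if_splits)

lemma fus_coeff_top: "fus_coeff m n (m + n) = 1"
  unfolding fus_coeff_def by simp presburger

lemma fus_prod_nonzero_le_sum_list: "fus_prod xs k \<noteq> 0 \<Longrightarrow> k \<le> sum_list xs"
proof (induction xs arbitrary: k)
  case Nil
  then show ?case by (simp add: fus_prod_Nil fus_basis_def split: if_splits)
next
  case (Cons x xs)
  then obtain n where "fus_prod xs n \<noteq> 0" "fus_coeff x n k \<noteq> 0"
    by (metis (no_types, lifting) fus_prod_Cons_apply mult_eq_0_iff sum.neutral)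
  with Cons.IH fus_coeff_nonzero_le show ?case
    by fastforce
qed

lemma finite_fus_prod_support: "finite {k. fus_prod xs k \<noteq> 0}"
proof (rule finite_subset)
  show "{k. fus_prod xs k \<noteq> 0} \<subseteq> {..sum_list xs}"
    using fus_prod_nonzero_le_sum_list by blast
qed simp

lemma fus_prod_Cons_ge: "fus_prod xs n * fus_coeff x n k \<le> fus_prod (x # xs) k"
proof (cases "fus_prod xs n = 0")
  case False
  then show ?thesis
    unfolding fus_prod_Cons_apply using finite_fus_prod_support [of xs]
    by (intro member_le_sum) auto
qed simp

lemma fus_prod_sum_list_pos: "0 < fus_prod xs (sum_list xs)"
proof (induction xs)
  case Nil
  then show ?case by (simp add: fus_prod_Nil fus_basis_def)
next
  case (Cons x xs)
  then show ?case
    using fus_prod_Cons_ge [of xs "sum_list xs" x "x + sum_list xs"] by (simp add: fus_coeff_top)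
qed

lemma word_length_le:
  assumes "xs \<noteq> []" "set xs \<subseteq> X" "fus_prod xs \<beta> \<noteq> 0"
  shows "word_length X \<beta> \<le> length xs"
  using assms unfolding word_length_def by (auto simp: Suc_le_eq intro!: Least_le)

lemma word_length_witness:
  assumes "generating_set X" "\<beta> \<noteq> 0"
  obtains xs where "length xs = word_length X \<beta>" "set xs \<subseteq> X" "fus_prod xs \<beta> \<noteq> 0"
proof -
  let ?P = "\<lambda>n. n \<ge> 1 \<and> (\<exists>xs. length xs = n \<and> set xs \<subseteq> X \<and> fus_prod xs \<beta> \<noteq> 0)"
  obtain xs where "xs \<noteq> []" "set xs \<subseteq> X" "fus_prod xs \<beta> \<noteq> 0"
    using assms(1) unfolding generating_set_def by blast
  then have "?P (length xs)"
    by (simp add: Suc_le_eq) blast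
  then have "?P (LEAST n. ?P n)"
    by (rule LeastI)
  with assms(2) that show ?thesis
    unfolding word_length_def by auto
qed

lemma generating_set_nonempty: "generating_set X \<Longrightarrow> X \<noteq> {}"
  unfolding generating_set_def by (metis list.set_sel(1) subset_empty empty_iff)

lemma generating_set_Max_ge_1:
  assumes "generating_set X"
  shows "1 \<le> Max X"
proof -
  obtain xs where xs: "set xs \<subseteq> X" "fus_prod xs 1 \<noteq> 0"
    using assms unfolding generating_set_def by blast
  have "1 \<le> sum_list xs"
    using xs(2) by (rule fus_prod_nonzero_le_sum_list)
  also have "\<dots> \<le> length xs * Max X"
    using assms xs(1) by (intro sum_list_le_length_mult_Max) (auto simp: generating_set_def)
  finally show ?thesis
    by (simp add: Suc_le_eq)
qed

lemma generating_set_1: "generating_set {1}"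
  unfolding generating_set_def
proof (intro conjI allI)
  fix \<beta> :: nat
  show "\<exists>xs. xs \<noteq> [] \<and> set xs \<subseteq> {1} \<and> fus_prod xs \<beta> \<noteq> 0"
  proof (cases "\<beta> = 0")
    case True
    have "fus_prod [1] 1 * fus_coeff 1 1 0 \<le> fus_prod [1, 1] 0"
      by (rule fus_prod_Cons_ge)
    moreover have "0 < fus_prod [1] 1"
      using fus_prod_sum_list_pos [of "[1]"] by simp
    ultimately show ?thesis
      using True by (intro exI [of _ "[1, 1]"]) (auto simp: fus_coeff_def)
  next
    case False
    then show ?thesis
      using fus_prod_sum_list_pos [of "replicate \<beta> 1"]
      by (intro exI [of _ "replicate \<beta> 1"]) (auto simp: sum_list_replicate)
  qed
qed simp

lemma ball_X_subset_atMost: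
  assumes "generating_set X"
  shows "ball_X X n \<subseteq> {..n * Max X}"
proof
  fix \<beta> assume "\<beta> \<in> ball_X X n"
  then have wl: "word_length X \<beta> \<le> n"
    by (simp add: ball_X_def)
  show "\<beta> \<in> {..n * Max X}"
  proof (cases "\<beta> = 0")
    case False
    obtain xs where xs: "length xs = word_length X \<beta>" "set xs \<subseteq> X" "fus_prod xs \<beta> \<noteq> 0"
      by (rule word_length_witness [OF assms False])
    have "\<beta> \<le> sum_list xs"
      using xs(3) by (rule fus_prod_nonzero_le_sum_list)
    also have "\<dots> \<le> length xs * Max X"
      using assms xs(2) by (intro sum_list_le_length_mult_Max) (auto simp: generating_set_def)
    also have "\<dots> \<le> n * Max X"
      using wl xs(1) by simp
    finally show ?thesis by simp
  qed simp
qed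

lemma mult_Max_mem_ball_X:
  assumes "generating_set X" "1 \<le> n"
  shows "n * Max X \<in> ball_X X n"
proof -
  let ?xs = "replicate n (Max X)"
  have "set ?xs \<subseteq> X"
    using assms generating_set_nonempty by (auto simp: generating_set_def)
  moreover have "fus_prod ?xs (n * Max X) \<noteq> 0"
    using fus_prod_sum_list_pos [of ?xs] by (simp add: sum_list_replicate)
  ultimately have "word_length X (n * Max X) \<le> length ?xs"
    using assms(2) by (intro word_length_le) auto
  then show ?thesis
    by (simp add: ball_X_def)
qed

lemma powr_real_Suc: "0 < q \<Longrightarrow> q powr (real k + 1) = q ^ Suc k"
  by (metis of_nat_Suc add.commute powr_realpow)

lemma qdim_eq_geometric_sum:
  assumes "0 < q"
  shows "qdim q k = (\<Sum>j\<le>k. (q\<^sup>2) ^ j) / q ^ k"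
proof (cases "q = 1")
  case True
  then show ?thesis by (simp add: qdim_def qnum_def)
next
  case False
  have q2: "q\<^sup>2 \<noteq> 1"
    using assms False by (simp add: power2_eq_1_iff)
  have "q powr (- (real k + 1)) = 1 / q ^ Suc k" "q powr (-1) = 1 / q"
    using assms by (simp_all only: powr_minus_divide powr_real_Suc powr_one_gt_zero_iff powr_one)
  then have "qdim q k = (1 / q ^ Suc k - q ^ Suc k) / (1 / q - q)"
    using False by (simp only: qdim_def qnum_def powr_real_Suc [OF assms] if_False)
  also have "\<dots> = (1 - (q ^ Suc k)\<^sup>2) / (1 - q\<^sup>2) / (q ^ Suc k / q)"
    using assms q2 by (simp add: field_simps power2_eq_square)
  also have "\<dots> = (1 - (q\<^sup>2) ^ Suc k) / (1 - q\<^sup>2) / q ^ k"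
    using assms by (simp add: power_mult_distrib flip: power_mult) (simp add: mult.commute)
  also have "(1 - (q\<^sup>2) ^ Suc k) / (1 - q\<^sup>2) = (\<Sum>j\<le>k. (q\<^sup>2) ^ j)"
    using geometric_sum [OF q2, of "Suc k"]
    by (simp add: lessThan_Suc_atMost) (metis minus_diff_eq minus_divide_divide)
  finally show ?thesis .
qed

lemma qdim_ge:
  assumes "0 < q"
  shows "(1 / q) ^ k \<le> qdim q k"
proof -
  have "1 \<le> (\<Sum>j\<le>k. (q\<^sup>2) ^ j)"
    using member_le_sum [of 0 "{..k}" "\<lambda>j. (q\<^sup>2) ^ j"] by simp
  then show ?thesis
    using assms by (simp add: qdim_eq_geometric_sum power_one_over divide_right_mono)
qed

lemma qdim_pos: "0 < q \<Longrightarrow> 0 < qdim q k"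
  using qdim_ge [of q k] by (meson less_le_trans zero_less_divide_1_iff zero_less_power)

lemma qdim_le:
  assumes "0 < q" "q \<le> 1"
  shows "qdim q k \<le> (real k + 1) * (1 / q) ^ k"
proof -
  have "(\<Sum>j\<le>k. (q\<^sup>2) ^ j) \<le> (\<Sum>j\<le>k. 1)"
    using assms by (intro sum_mono power_le_one) (auto simp: power_le_one)
  then show ?thesis
    using assms by (simp add: qdim_eq_geometric_sum power_one_over divide_right_mono)
qed

lemma set_weight_ball_X_ge:
  assumes "0 < q" "generating_set X" "1 \<le> n"
  shows "((1 / q) ^ (2 * Max X)) ^ n \<le> set_weight q (ball_X X n)"
proof -
  have "((1 / q) ^ (2 * Max X)) ^ n = ((1 / q) ^ (n * Max X))\<^sup>2"
    by (simp flip: power_mult add: ac_simps)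
  also have "\<dots> \<le> (qdim q (n * Max X))\<^sup>2"
    using assms(1) by (intro power_mono qdim_ge) auto
  also have "\<dots> \<le> set_weight q (ball_X X n)"
    unfolding set_weight_def
    using mult_Max_mem_ball_X [OF assms(2,3)] ball_X_subset_atMost [OF assms(2)]
    by (intro member_le_sum) (auto intro: finite_subset)
  finally show ?thesis .
qed

lemma set_weight_ball_X_le:
  assumes "0 < q" "q \<le> 1" "generating_set X"
  shows "set_weight q (ball_X X n) \<le> (real (Max X) * real n + 1) ^ 3 * ((1 / q) ^ (2 * Max X)) ^ n"
proof -
  define N where "N = n * Max X"
  have qdim_le_N: "qdim q b \<le> (real N + 1) * (1 / q) ^ N" if "b \<le> N" for b
  proof -
    have "qdim q b \<le> (real b + 1) * (1 / q) ^ b"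
      using assms(1,2) by (rule qdim_le)
    also have "\<dots> \<le> (real N + 1) * (1 / q) ^ N"
      using assms that by (intro mult_mono power_increasing) auto
    finally show ?thesis .
  qed
  have "set_weight q (ball_X X n) \<le> (\<Sum>b\<le>N. (qdim q b)\<^sup>2)"
    unfolding set_weight_def N_def using ball_X_subset_atMost [OF assms(3)]
    by (intro sum_mono2) auto
  also have "\<dots> \<le> (\<Sum>b\<le>N. ((real N + 1) * (1 / q) ^ N)\<^sup>2)"
    using assms qdim_le_N qdim_pos by (intro sum_mono power_mono) (auto intro: less_imp_le)
  also have "\<dots> = (real N + 1) ^ 3 * ((1 / q) ^ N)\<^sup>2"
    by (simp add: power_mult_distrib power2_eq_square power3_eq_cube)
  also have "((1 / q) ^ N)\<^sup>2 = ((1 / q) ^ (2 * Max X)) ^ n"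
    by (simp add: N_def ac_simps flip: power_mult)
  finally show ?thesis
    by (simp add: N_def mult.commute)
qed

lemma root_tendsto_of_polynomial_sandwich:
  fixes W :: "nat \<Rightarrow> real"
  assumes "0 < c" "0 < A"
    and lower: "\<And>n. 1 \<le> n \<Longrightarrow> c ^ n \<le> W n"
    and upper: "\<And>n. 1 \<le> n \<Longrightarrow> W n \<le> (A * real n + 1) ^ k * c ^ n"
  shows "(\<lambda>n. W n powr (1 / real n)) \<longlonglongrightarrow> c"
proof (rule tendsto_sandwich)
  have power_root: "(x ^ m) powr (1 / real n) = x powr (real m / real n)" if "0 < x" for x m n
    using that by (simp add: powr_realpow [symmetric] powr_powr)
  show "\<forall>\<^sub>F n in sequentially. c \<le> W n powr (1 / real n)"
  proof (rule eventually_sequentiallyI)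
    fix n :: nat assume "1 \<le> n"
    have "c = (c ^ n) powr (1 / real n)"
      using assms(1) \<open>1 \<le> n\<close> by (simp add: power_root)
    also have "\<dots> \<le> W n powr (1 / real n)"
      using assms(1) lower [OF \<open>1 \<le> n\<close>] by (intro powr_mono2) auto
    finally show "c \<le> W n powr (1 / real n)" .
  qed
  show "\<forall>\<^sub>F n in sequentially. W n powr (1 / real n) \<le> (A * real n + 1) powr (real k / real n) * c"
  proof (rule eventually_sequentiallyI)
    fix n :: nat assume "1 \<le> n"
    have "0 \<le> W n"
      using assms(1) lower [OF \<open>1 \<le> n\<close>] by (meson order_trans zero_le_power less_imp_le)
    then have "W n powr (1 / real n) \<le> ((A * real n + 1) ^ k * c ^ n) powr (1 / real n)"
      using upper [OF \<open>1 \<le> n\<close>] by (intro powr_mono2) auto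
    also have "\<dots> = (A * real n + 1) powr (real k / real n) * c"
      using assms(1,2) \<open>1 \<le> n\<close>
      by (simp add: powr_mult power_root add_pos_nonneg)
    finally show "W n powr (1 / real n) \<le> (A * real n + 1) powr (real k / real n) * c" .
  qed
  show "(\<lambda>n. (A * real n + 1) powr (real k / real n) * c) \<longlonglongrightarrow> c"
    using assms(2) by real_asymp
qed simp

lemma growth_rate_eq:
  assumes "0 < q" "q \<le> 1" "generating_set X"
  shows "growth_rate q X = (1 / q) ^ (2 * Max X)"
proof -
  have "(\<lambda>n. set_weight q (ball_X X n) powr (1 / real n)) \<longlonglongrightarrow> (1 / q) ^ (2 * Max X)"
  proof (rule root_tendsto_of_polynomial_sandwich)
    show "0 < (1 / q) ^ (2 * Max X)"
      using assms(1) by simp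
    show "0 < real (Max X)"
      using generating_set_Max_ge_1 [OF assms(3)] by simp
  qed (use assms set_weight_ball_X_ge set_weight_ball_X_le in blast)+
  then show ?thesis
    unfolding growth_rate_def by (rule limI)
qed

theorem proposition4p5:
  fixes q :: real
  assumes "0 < q" and "q \<le> 1"
  shows "uniform_growth q = q powr (-2)"
proof -
  have min: "growth_rate q {1} = (1 / q) ^ 2"
    using growth_rate_eq [OF assms generating_set_1] by simp
  have "(1 / q) ^ 2 \<le> growth_rate q X" if "generating_set X" for X
    using assms generating_set_Max_ge_1 [OF that]
    by (simp add: growth_rate_eq [OF assms that] power_increasing)
  then have "uniform_growth q = (1 / q) ^ 2"
    unfolding uniform_growth_def using generating_set_1 min
    by (intro cInf_eq_minimum) (auto intro!: exI [of _ "{1}"])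
  also have "\<dots> = q powr (-2)"
    using assms by (simp add: powr_neg_numeral power_one_over)
  finally show ?thesis .
qed

end
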